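(* Assume $G$ is connected. Let $S\subset V$ with $\emptyset\ne S\ne V$, and let $R_S=\mathrm{vol}\,S/\mathrm{vol}\,V$; assume $R_S\ne\frac12$. Let $\lambda_2>0$ be the second smallest eigenvalue of $\Delta$. If $$\tau>\tau_t(S):=\frac1{\lambda_2}\log\left(\frac{(\mathrm{vol}\,S)^{1/2}(\mathrm{vol}\,S^c)^{1/2}}{(\mathrm{vol}\,V)^{1/2}\,|R_S-\frac12|\,d_-^{r/2}}\right),$$ then the set $S'=\{i\in V:(e^{-\tau\Delta}\chi_S)_i\ge\frac12\}$ equals $V$ if $R_S>\frac12$, and equals $\emptyset$ if $R_S<\frac12$.
   Context: $G=(V,E)$ is a finite undirected weighted graph with vertex set $V=\{1,\dots,n\}$. The weights satisfy $\omega_{ij}=\omega_{ji}\ge0$, with $\omega_{ij}>0$ iff $\{i,j\}\in E$, and $\omega_{ii}=0$. The degrees are $d_i=\sum_j\omega_{ij}>0$, and $d_-=\min_id_i$. A parameter $r\in[0,1]$ is fixed. For $S\subset V$, $S^c=V\setminus S$, $\chi_S$ is the indicator of $S$, and $\mathrm{vol}\,S=\sum_{i\in S}d_i^r$. The graph Laplacian is $(\Delta u)_i=d_i^{-r}\sum_j\omega_{ij}(u_i-u_j)$, whose eigenvalues (those of the matrix $D^{-r}(D-A)$) are $0=\lambda_1\le\lambda_2\le\dots\le\lambda_n$. $e^{-t\Delta}$ is the solution operator of $\dot u=-\Delta u$. *)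

theory Defs
  imports "Jordan_Normal_Form.Char_Poly" "HOL-Analysis.Analysis"
begin

text \<open>Vertices are 0,...,n-1 (a relabelling of 1,...,n). Weights w i j.\<close>

definition deg :: "(nat \<Rightarrow> nat \<Rightarrow> real) \<Rightarrow> nat \<Rightarrow> nat \<Rightarrow> real" where
  "deg w n i = (\<Sum>j<n. w i j)"

definition dmin :: "(nat \<Rightarrow> nat \<Rightarrow> real) \<Rightarrow> nat \<Rightarrow> real" where
  "dmin w n = Min (deg w n ` {..<n})"

definition vol :: "(nat \<Rightarrow> nat \<Rightarrow> real) \<Rightarrow> real \<Rightarrow> nat \<Rightarrow> nat set \<Rightarrow> real" where
  "vol w r n S = (\<Sum>i\<in>S. deg w n i powr r)"

definition graph_connected :: "(nat \<Rightarrow> nat \<Rightarrow> real) \<Rightarrow> nat \<Rightarrow> bool" where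
  "graph_connected w n = (\<forall>i<n. \<forall>j<n. (\<lambda>a b. a < n \<and> b < n \<and> w a b > 0)\<^sup>*\<^sup>* i j)"

definition lap :: "(nat \<Rightarrow> nat \<Rightarrow> real) \<Rightarrow> real \<Rightarrow> nat \<Rightarrow> (nat \<Rightarrow> real) \<Rightarrow> nat \<Rightarrow> real" where
  "lap w r n u i = deg w n i powr (-r) * (\<Sum>j<n. w i j * (u i - u j))"

definition lap_mat :: "(nat \<Rightarrow> nat \<Rightarrow> real) \<Rightarrow> real \<Rightarrow> nat \<Rightarrow> real mat" where
  "lap_mat w r n = Matrix.mat n n (\<lambda>(i,j). deg w n i powr (-r) *
       ((if i = j then deg w n i else 0) - w i j))"

text \<open>k-th smallest eigenvalue counted with algebraic multiplicity (k >= 1).\<close>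
definition kth_eigenvalue :: "real mat \<Rightarrow> nat \<Rightarrow> real" where
  "kth_eigenvalue A k = Inf {\<mu>. poly (char_poly A) \<mu> = 0 \<and>
      (\<Sum>\<nu>\<in>{\<nu>. poly (char_poly A) \<nu> = 0 \<and> \<nu> \<le> \<mu>}. order \<nu> (char_poly A)) \<ge> k}"

text \<open>u solves du/dt = - Delta u for all real times (so u t = e^{-t Delta} (u 0)).\<close>
definition heat_solution :: "(nat \<Rightarrow> nat \<Rightarrow> real) \<Rightarrow> real \<Rightarrow> nat \<Rightarrow> (real \<Rightarrow> nat \<Rightarrow> real) \<Rightarrow> bool" where
  "heat_solution w r n u = (\<forall>t. \<forall>i<n.
      ((\<lambda>s. u s i) has_real_derivative (- lap w r n (u t) i)) (at t))"

end

theory Submission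
  imports Defs
begin

text \<open>Give vertex \<open>i\<close> the mass \<open>d\<^sub>i\<^sup>r\<close>. For the induced inner product \<open>\<Delta>\<close> is self-adjoint, it
  preserves the weighted mean, and \<open>\<langle>v, \<Delta> v\<rangle>\<close> is the Dirichlet energy of \<open>v\<close>. Minimizing this energy
  on the unit sphere of mean-zero functions produces an eigenvalue \<open>\<mu> > 0\<close> with the Poincar\<acute>e
  inequality \<open>\<langle>v, \<Delta> v\<rangle> \<ge> \<mu> \<parallel>v\<parallel>\<^sup>2\<close>; since \<open>0\<close> is a simple root of the characteristic polynomial,
  \<open>0 < \<lambda>\<^sub>2 \<le> \<mu>\<close>. Hence \<open>u(t) - R\<^sub>S\<close> decays like \<open>exp (-\<lambda>\<^sub>2 t)\<close> in the weighted norm, starting from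
  \<open>\<parallel>\<chi>\<^sub>S - R\<^sub>S\<parallel>\<^sup>2 = vol S vol S\<^sup>c / vol V\<close>. As \<open>\<parallel>v\<parallel>\<^sup>2 \<ge> d\<^sub>-\<^sup>r |v\<^sub>i|\<^sup>2\<close>, beyond \<open>\<tau>\<^sub>t(S)\<close> every
  value \<open>u\<^sub>i(\<tau>)\<close> is within \<open>|R\<^sub>S - 1/2|\<close> of \<open>R\<^sub>S\<close>, so lies on the same side of \<open>1/2\<close> as \<open>R\<^sub>S\<close>.\<close>

lemma linear_coeff_eq_0_if_quadratic_nonneg:
  fixes a b :: real
  assumes "\<And>t. a * t ^ 2 + 2 * b * t \<ge> 0"
  shows "b = 0"
proof (rule ccontr)
  assume b: "b \<noteq> 0"
  define e where "e = 1 / (\<bar>a\<bar> + 1)"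
  have e: "e > 0" "a * e < 2"
    using mult_right_mono[OF abs_ge_self[of a], of e] unfolding e_def by (auto simp: field_simps)
  have "a * (- b * e) ^ 2 + 2 * b * (- b * e) = b ^ 2 * e * (a * e - 2)"
    by (simp add: power2_eq_square algebra_simps)
  also have "\<dots> < 0" using b e by (intro mult_pos_neg) auto
  finally show False using assms[of "- b * e"] by simp
qed

lemma exp_decay_below_threshold:
  fixes k a E \<tau> :: real
  assumes "k > 0" "a > 0" "E > a ^ 2" "\<tau> > (1 / k) * ln (sqrt E / a)"
  shows "\<tau> > 0" and "exp (-2 * k * \<tau>) * E < a ^ 2"
proof -
  have "a < sqrt E" by (rule real_less_rsqrt) (rule assms(3))
  then have ratio: "sqrt E / a > 1" using assms(2) by simp
  then have "(1 / k) * ln (sqrt E / a) > 0" using assms(1) by simp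
  then show "\<tau> > 0" using assms(4) by linarith
  have "ln (sqrt E / a) < k * \<tau>"
    using assms(1,4) by (simp add: field_simps)
  then have "exp (ln (sqrt E / a)) < exp (k * \<tau>)" by simp
  then have "sqrt E / a < exp (k * \<tau>)" using ratio by simp
  then have "(sqrt E / a) ^ 2 < exp (k * \<tau>) ^ 2"
    using ratio by (intro power_strict_mono) auto
  then have "E / a ^ 2 < exp (2 * k * \<tau>)"
    using le_less_trans[OF zero_le_power2 assms(3)] by (simp add: power_divide exp_double[symmetric] mult.assoc)
  then show "exp (-2 * k * \<tau>) * E < a ^ 2"
    using assms(2) by (simp add: exp_minus field_simps)
qed

lemma two_le_if_proper_nonempty_subset:
  fixes S :: "nat set"
  assumes "S \<subseteq> {..<n}" "S \<noteq> {}" "S \<noteq> {..<n}"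
  shows "2 \<le> n"
proof (rule ccontr)
  assume "\<not> 2 \<le> n"
  moreover obtain i where "i \<in> S" using assms(2) by auto
  ultimately have "{..<n} = {i}" using assms(1) by auto
  then have "S = {..<n}" using assms(1) \<open>i \<in> S\<close> by auto
  then show False using assms(3) by simp
qed

lemma superlevel_set_if_close:
  fixes x :: "nat \<Rightarrow> real"
  assumes "\<And>i. i < n \<Longrightarrow> \<bar>x i - R\<bar> < \<bar>R - 1/2\<bar>"
  shows "(R > 1/2 \<longrightarrow> {i. i < n \<and> x i \<ge> 1/2} = {..<n}) \<and> (R < 1/2 \<longrightarrow> {i. i < n \<and> x i \<ge> 1/2} = {})"
proof (intro conjI impI)
  assume "R > 1/2"
  then have "x i > 1/2" if "i < n" for i using assms[OF that] by linarith
  then show "{i. i < n \<and> x i \<ge> 1/2} = {..<n}" by force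
next
  assume "R < 1/2"
  then have "x i < 1/2" if "i < n" for i using assms[OF that] by linarith
  then show "{i. i < n \<and> x i \<ge> 1/2} = {}" by force
qed

section \<open>The Dirichlet form of a weighted graph\<close>

locale weighted_graph =
  fixes w :: "nat \<Rightarrow> nat \<Rightarrow> real" and n :: nat and r :: real
  assumes weight_sym: "\<And>i j. i < n \<Longrightarrow> j < n \<Longrightarrow> w i j = w j i"
    and weight_nonneg: "\<And>i j. i < n \<Longrightarrow> j < n \<Longrightarrow> w i j \<ge> 0"
    and deg_pos: "\<And>i. i < n \<Longrightarrow> deg w n i > 0"
    and connected: "graph_connected w n"
begin

definition mass :: "nat \<Rightarrow> real" where
  "mass i = deg w n i powr r"

definition sqnorm :: "(nat \<Rightarrow> real) \<Rightarrow> real" where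
  "sqnorm v = (\<Sum>i<n. mass i * v i ^ 2)"

definition inner_mass :: "(nat \<Rightarrow> real) \<Rightarrow> (nat \<Rightarrow> real) \<Rightarrow> real" where
  "inner_mass a b = (\<Sum>i<n. mass i * a i * b i)"

definition dirichlet :: "(nat \<Rightarrow> real) \<Rightarrow> (nat \<Rightarrow> real) \<Rightarrow> real" where
  "dirichlet a b = (\<Sum>i<n. \<Sum>j<n. w i j * a i * (b i - b j))"

lemma mass_pos: "i < n \<Longrightarrow> mass i > 0"
  using deg_pos[of i] by (simp add: mass_def)

lemma vol_eq_sum_mass: "vol w r n X = (\<Sum>i\<in>X. mass i)"
  by (simp add: vol_def mass_def)

lemma mass_mult_lap: "i < n \<Longrightarrow> mass i * lap w r n v i = (\<Sum>j<n. w i j * (v i - v j))"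
proof -
  assume i: "i < n"
  have "mass i * deg w n i powr (-r) = 1"
    using deg_pos[OF i] by (simp add: mass_def powr_add[symmetric])
  then show ?thesis unfolding lap_def by (metis mult.assoc mult_1)
qed

lemma sum_weights_swap: "(\<Sum>i<n. \<Sum>j<n. w i j * f i j) = (\<Sum>i<n. \<Sum>j<n. w i j * f j i)"
proof -
  have "(\<Sum>i<n. \<Sum>j<n. w i j * f i j) = (\<Sum>j<n. \<Sum>i<n. w i j * f i j)"
    by (rule sum.swap)
  also have "\<dots> = (\<Sum>j<n. \<Sum>i<n. w j i * f i j)"
    by (intro sum.cong refl) (simp add: weight_sym)
  finally show ?thesis .
qed

lemma sum_mass_mult_lap: "(\<Sum>i<n. mass i * lap w r n v i) = 0"
proof -
  have "(\<Sum>i<n. \<Sum>j<n. w i j * (v i - v j)) = (\<Sum>i<n. \<Sum>j<n. w i j * (v j - v i))"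
    by (rule sum_weights_swap)
  also have "\<dots> = - (\<Sum>i<n. \<Sum>j<n. w i j * (v i - v j))"
    by (simp add: sum_negf[symmetric] algebra_simps)
  finally show ?thesis by (simp add: mass_mult_lap)
qed

lemma dirichlet_eq_inner_lap: "dirichlet a b = inner_mass a (lap w r n b)"
  unfolding dirichlet_def inner_mass_def
  by (intro sum.cong refl) (simp add: mult.assoc mass_mult_lap sum_distrib_left algebra_simps)

lemma dirichlet_symmetrized:
  "2 * dirichlet a b = (\<Sum>i<n. \<Sum>j<n. w i j * ((a i - a j) * (b i - b j)))"
proof -
  have "dirichlet a b = (\<Sum>i<n. \<Sum>j<n. w i j * (a i * (b i - b j)))"
    unfolding dirichlet_def by (simp add: mult.assoc)
  moreover have "\<dots> = (\<Sum>i<n. \<Sum>j<n. w i j * (a j * (b j - b i)))"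
    by (rule sum_weights_swap)
  ultimately have "2 * dirichlet a b = (\<Sum>i<n. \<Sum>j<n. w i j * (a i * (b i - b j)))
      + (\<Sum>i<n. \<Sum>j<n. w i j * (a j * (b j - b i)))"
    by simp
  also have "\<dots> = (\<Sum>i<n. \<Sum>j<n. w i j * ((a i - a j) * (b i - b j)))"
    by (simp add: sum.distrib[symmetric] algebra_simps)
  finally show ?thesis .
qed

lemma dirichlet_commute: "dirichlet a b = dirichlet b a"
  using dirichlet_symmetrized[of a b] dirichlet_symmetrized[of b a] by (simp add: mult.commute)

lemma dirichlet_nonneg: "dirichlet v v \<ge> 0"
proof -
  have "2 * dirichlet v v \<ge> 0" unfolding dirichlet_symmetrized
    by (intro sum_nonneg) (simp add: weight_nonneg)
  then show ?thesis by simp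
qed

lemma const_if_const_on_edges:
  assumes "\<And>i j. i < n \<Longrightarrow> j < n \<Longrightarrow> w i j > 0 \<Longrightarrow> v i = v j"
    and "i < n" "j < n"
  shows "v i = v j"
proof -
  have "(\<lambda>a b. a < n \<and> b < n \<and> w a b > 0)\<^sup>*\<^sup>* i j"
    using connected assms unfolding graph_connected_def by blast
  then show ?thesis
    by (induction rule: rtranclp_induct) (use assms in auto)
qed

lemma dirichlet_eq_0_imp_const:
  assumes "dirichlet v v = 0" "i < n" "j < n"
  shows "v i = v j"
proof (rule const_if_const_on_edges[OF _ assms(2,3)])
  fix a b assume ab: "a < n" "b < n" "w a b > 0"
  have "w a b * ((v a - v b) * (v a - v b)) \<le> (\<Sum>j<n. w a j * ((v a - v j) * (v a - v j)))"
    using ab by (intro member_le_sum) (auto simp: weight_nonneg)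
  also have "\<dots> \<le> (\<Sum>i<n. \<Sum>j<n. w i j * ((v i - v j) * (v i - v j)))"
    using ab by (intro member_le_sum) (auto intro!: sum_nonneg simp: weight_nonneg)
  also have "\<dots> = 0"
    using assms(1) dirichlet_symmetrized[of v v] by simp
  finally have "(v a - v b) * (v a - v b) \<le> 0"
    using ab(3) by (simp add: mult_le_0_iff)
  then show "v a = v b" by (auto simp: mult_le_0_iff)
qed

lemma dirichlet_eq_0_mean_zero_imp_0:
  assumes "dirichlet v v = 0" "(\<Sum>j<n. mass j * v j) = 0" "i < n"
  shows "v i = 0"
proof -
  have const: "v j = v i" if "j < n" for j
    using dirichlet_eq_0_imp_const[OF assms(1) that assms(3)] .
  have "(\<Sum>j<n. mass j * v j) = (\<Sum>j<n. v i * mass j)"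
    using const by (intro sum.cong refl) (metis lessThan_iff mult.commute)
  then have "v i * (\<Sum>j<n. mass j) = 0"
    using assms(2) by (simp add: sum_distrib_left)
  moreover have "(\<Sum>j<n. mass j) > 0"
    using assms(3) mass_pos by (intro sum_pos) auto
  ultimately show ?thesis by simp
qed

lemma sqnorm_nonneg: "sqnorm v \<ge> 0"
  unfolding sqnorm_def using mass_pos by (intro sum_nonneg) (simp add: less_imp_le)

lemma mass_mult_sq_le_sqnorm: "i < n \<Longrightarrow> mass i * v i ^ 2 \<le> sqnorm v"
  unfolding sqnorm_def using mass_pos by (intro member_le_sum) (auto simp: less_imp_le)

lemma sqnorm_eq_0_iff: "sqnorm v = 0 \<longleftrightarrow> (\<forall>i<n. v i = 0)"
proof -
  have "sqnorm v = 0 \<longleftrightarrow> (\<forall>i\<in>{..<n}. mass i * v i ^ 2 = 0)"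
    unfolding sqnorm_def using mass_pos by (intro sum_nonneg_eq_0_iff) (auto simp: less_imp_le)
  moreover have "mass i * v i ^ 2 = 0 \<longleftrightarrow> v i = 0" if "i < n" for i
    using mass_pos[OF that] by simp
  ultimately show ?thesis by auto
qed

lemma dirichlet_cong:
  "(\<And>i. i < n \<Longrightarrow> a i = a' i) \<Longrightarrow> (\<And>i. i < n \<Longrightarrow> b i = b' i) \<Longrightarrow> dirichlet a b = dirichlet a' b'"
  unfolding dirichlet_def by (intro sum.cong refl) auto

lemma sqnorm_cong: "(\<And>i. i < n \<Longrightarrow> a i = a' i) \<Longrightarrow> sqnorm a = sqnorm a'"
  unfolding sqnorm_def by (intro sum.cong refl) auto

lemma dirichlet_scale: "dirichlet (\<lambda>i. c * a i) (\<lambda>i. c * a i) = c ^ 2 * dirichlet a a"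
  unfolding dirichlet_def by (simp add: sum_distrib_left algebra_simps power2_eq_square)

lemma sqnorm_scale: "sqnorm (\<lambda>i. c * a i) = c ^ 2 * sqnorm a"
  unfolding sqnorm_def by (simp add: sum_distrib_left algebra_simps power2_eq_square)

lemma dirichlet_add_scaled:
  "dirichlet (\<lambda>i. v i + t * h i) (\<lambda>i. v i + t * h i)
     = dirichlet v v + 2 * t * dirichlet h v + t ^ 2 * dirichlet h h"
proof -
  have "dirichlet (\<lambda>i. v i + t * h i) (\<lambda>i. v i + t * h i)
      = (\<Sum>i<n. \<Sum>j<n. w i j * v i * (v i - v j) + t * (w i j * h i * (v i - v j))
          + t * (w i j * v i * (h i - h j)) + t ^ 2 * (w i j * h i * (h i - h j)))"
    unfolding dirichlet_def by (intro sum.cong refl) (simp add: algebra_simps power2_eq_square)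
  also have "\<dots> = dirichlet v v + t * dirichlet h v + t * dirichlet v h + t ^ 2 * dirichlet h h"
    unfolding dirichlet_def by (simp only: sum.distrib sum_distrib_left)
  finally show ?thesis using dirichlet_commute[of v h] by simp
qed

lemma sqnorm_add_scaled: "sqnorm (\<lambda>i. v i + t * h i) = sqnorm v + 2 * t * inner_mass v h + t ^ 2 * sqnorm h"
proof -
  have "sqnorm (\<lambda>i. v i + t * h i)
      = (\<Sum>i<n. mass i * v i ^ 2 + 2 * t * (mass i * v i * h i) + t ^ 2 * (mass i * h i ^ 2))"
    unfolding sqnorm_def by (intro sum.cong refl) (simp add: algebra_simps power2_eq_square)
  also have "\<dots> = sqnorm v + 2 * t * inner_mass v h + t ^ 2 * sqnorm h"
    unfolding sqnorm_def inner_mass_def by (simp only: sum.distrib sum_distrib_left)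
  finally show ?thesis .
qed

lemma lap_eigenvalue_nonneg:
  assumes "\<And>i. i < n \<Longrightarrow> lap w r n v i = \<nu> * v i" "k < n" "v k \<noteq> 0"
  shows "\<nu> \<ge> 0"
proof -
  have "dirichlet v v = \<nu> * sqnorm v"
    unfolding dirichlet_eq_inner_lap inner_mass_def sqnorm_def
    by (simp add: assms(1) sum_distrib_left power2_eq_square algebra_simps)
  moreover have "sqnorm v > 0"
    using sqnorm_nonneg[of v] sqnorm_eq_0_iff[of v] assms(2,3) by fastforce
  ultimately show ?thesis
    using dirichlet_nonneg[of v] by (simp add: zero_le_mult_iff)
qed

section \<open>The Laplacian matrix and its zero eigenvalue\<close>

abbreviation L :: "real mat" where
  "L \<equiv> lap_mat w r n"

lemma L_carrier: "L \<in> carrier_mat n n"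
  by (simp add: lap_mat_def)

lemma L_mult_vec: "i < n \<Longrightarrow> (L *\<^sub>v Matrix.vec n f) $ i = lap w r n f i"
proof -
  assume i: "i < n"
  let ?d = "deg w n i"
  have "(L *\<^sub>v Matrix.vec n f) $ i = (\<Sum>j<n. ?d powr (-r) * ((if i = j then ?d else 0) - w i j) * f j)"
    using i by (simp add: lap_mat_def scalar_prod_def lessThan_atLeast0 mult.commute)
  also have "\<dots> = ?d powr (-r) * ((\<Sum>j<n. (if i = j then ?d else 0) * f j) - (\<Sum>j<n. w i j * f j))"
    by (simp add: sum_distrib_left sum_subtractf algebra_simps)
  also have "(\<Sum>j<n. (if i = j then ?d else 0) * f j) = (\<Sum>j<n. w i j * f i)"
  proof -
    have "(\<Sum>j<n. (if i = j then ?d else 0) * f j) = (\<Sum>j<n. if i = j then ?d * f i else 0)"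
      by (rule sum.cong) auto
    then show ?thesis using i by (simp add: deg_def sum_distrib_right)
  qed
  finally show ?thesis unfolding lap_def by (simp add: sum_subtractf algebra_simps)
qed

lemma char_poly_root_iff_lap_eigenfunction:
  "poly (char_poly L) \<mu> = 0 \<longleftrightarrow> (\<exists>v. (\<exists>k<n. v k \<noteq> 0) \<and> (\<forall>i<n. lap w r n v i = \<mu> * v i))"
proof
  assume "poly (char_poly L) \<mu> = 0"
  then obtain x where "eigenvector L x \<mu>"
    using eigenvalue_root_char_poly[OF L_carrier] unfolding eigenvalue_def by blast
  then have x: "x \<in> carrier_vec n" "x \<noteq> 0\<^sub>v n" "L *\<^sub>v x = \<mu> \<cdot>\<^sub>v x"
    unfolding eigenvector_def using L_carrier by auto
  define v where "v i = x $ i" for i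
  have x_eq: "x = Matrix.vec n v"
    using x(1) by (auto simp: v_def)
  have "\<exists>k<n. v k \<noteq> 0"
    using x(1,2) by (metis eq_vecI index_zero_vec carrier_vecD v_def)
  moreover have "lap w r n v i = \<mu> * v i" if "i < n" for i
    using arg_cong[OF x(3), of "\<lambda>y. y $ i"] L_mult_vec[OF that, of v] that
    unfolding x_eq by simp
  ultimately show "\<exists>v. (\<exists>k<n. v k \<noteq> 0) \<and> (\<forall>i<n. lap w r n v i = \<mu> * v i)"
    by blast
next
  assume "\<exists>v. (\<exists>k<n. v k \<noteq> 0) \<and> (\<forall>i<n. lap w r n v i = \<mu> * v i)"
  then obtain v k where v: "k < n" "v k \<noteq> 0" "\<And>i. i < n \<Longrightarrow> lap w r n v i = \<mu> * v i"
    by blast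
  have "Matrix.vec n v \<noteq> 0\<^sub>v n"
    using v(1,2) by (metis index_vec index_zero_vec(1))
  moreover have "L *\<^sub>v Matrix.vec n v = \<mu> \<cdot>\<^sub>v Matrix.vec n v"
  proof (rule eq_vecI)
    fix i assume "i < dim_vec (\<mu> \<cdot>\<^sub>v Matrix.vec n v)"
    then have i: "i < n" by simp
    show "(L *\<^sub>v Matrix.vec n v) $ i = (\<mu> \<cdot>\<^sub>v Matrix.vec n v) $ i"
      by (subst L_mult_vec[OF i]) (simp add: v(3)[OF i] i)
  qed (use L_carrier in simp)
  ultimately have "eigenvector L (Matrix.vec n v) \<mu>"
    unfolding eigenvector_def using L_carrier by simp
  then show "poly (char_poly L) \<mu> = 0"
    using eigenvalue_root_char_poly[OF L_carrier] unfolding eigenvalue_def by blast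
qed

lemma char_poly_root_nonneg: "poly (char_poly L) \<nu> = 0 \<Longrightarrow> \<nu> \<ge> 0"
  using lap_eigenvalue_nonneg by (metis char_poly_root_iff_lap_eigenfunction)

lemma char_poly_root_0: "0 < n \<Longrightarrow> poly (char_poly L) 0 = 0"
  unfolding char_poly_root_iff_lap_eigenfunction
  by (rule exI[of _ "\<lambda>_. 1"]) (auto simp: lap_def)

lemma mass_weighted_column_sum: "j < n \<Longrightarrow> (\<Sum>k<n. mass k * L $$ (k, j)) = 0"
proof -
  assume j: "j < n"
  have "(\<Sum>k<n. mass k * L $$ (k, j)) = (\<Sum>k<n. (if k = j then deg w n k else 0) - w k j)"
  proof (rule sum.cong[OF refl])
    fix k assume k: "k \<in> {..<n}"
    have "mass k * deg w n k powr (-r) = 1"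
      using deg_pos[of k] k by (simp add: mass_def powr_add[symmetric])
    then show "mass k * L $$ (k, j) = (if k = j then deg w n k else 0) - w k j"
      using k j by (simp add: lap_mat_def mult.assoc[symmetric])
  qed
  also have "\<dots> = deg w n j - (\<Sum>k<n. w j k)"
    using j by (simp add: sum_subtractf weight_sym)
  finally show ?thesis by (simp add: deg_def)
qed

definition shifted_lap_mat :: "real \<Rightarrow> real mat" where
  "shifted_lap_mat x = Matrix.mat n n (\<lambda>(i, j). (if i = j then x else 0) - L $$ (i, j))"

text \<open>Since the masses annihilate the columns of \<open>L\<close>, replacing the first row of \<open>x I - L\<close> by them
  divides its determinant by \<open>x\<close>, up to the factor \<open>mass 0\<close>.\<close>

definition bordered_lap_mat :: "real \<Rightarrow> real mat" where
  "bordered_lap_mat x = Matrix.mat n n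
     (\<lambda>(i, j). if i = 0 then mass j else (if i = j then x else 0) - L $$ (i, j))"

definition mass_row_mat :: "real mat" where
  "mass_row_mat = Matrix.mat n n (\<lambda>(i, j). if i = 0 then mass j else if i = j then 1 else 0)"

lemma poly_char_poly_eq_det: "poly (char_poly L) x = Determinant.det (shifted_lap_mat x)"
proof -
  have "- char_matrix L x = shifted_lap_mat x"
    by (rule eq_matI) (auto simp: char_matrix_def shifted_lap_mat_def L_carrier lap_mat_def)
  then show ?thesis using char_poly_matrix[OF L_carrier] by simp
qed

lemma det_mass_row_mat: "0 < n \<Longrightarrow> Determinant.det mass_row_mat = mass 0"
proof -
  assume n: "0 < n"
  have "upper_triangular mass_row_mat"
    unfolding upper_triangular_def mass_row_mat_def by auto
  then have "Determinant.det mass_row_mat = prod_list (diag_mat mass_row_mat)"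
    by (rule det_upper_triangular[of _ n]) (simp add: mass_row_mat_def)
  also have "\<dots> = (\<Prod>i = 0..<n. mass_row_mat $$ (i, i))"
    by (simp add: prod_list_diag_prod mass_row_mat_def)
  also have "\<dots> = (\<Prod>i = 0..<n. if i = 0 then mass 0 else 1)"
    by (rule prod.cong) (auto simp: mass_row_mat_def)
  also have "\<dots> = mass 0" using n by (simp add: prod.delta)
  finally show ?thesis .
qed

lemma mass_row_mat_mult_shifted:
  assumes "0 < n"
  shows "mass_row_mat * shifted_lap_mat x = multrow 0 x (bordered_lap_mat x)"
proof (rule eq_matI)
  fix i j assume "i < dim_row (multrow 0 x (bordered_lap_mat x))"
    and "j < dim_col (multrow 0 x (bordered_lap_mat x))"
  then have i: "i < n" and j: "j < n" by (auto simp: bordered_lap_mat_def)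
  show "(mass_row_mat * shifted_lap_mat x) $$ (i, j) = multrow 0 x (bordered_lap_mat x) $$ (i, j)"
  proof (cases "i = 0")
    case True
    have "(mass_row_mat * shifted_lap_mat x) $$ (i, j)
        = (\<Sum>k<n. mass k * ((if k = j then x else 0) - L $$ (k, j)))"
      using i j True by (simp add: mass_row_mat_def shifted_lap_mat_def scalar_prod_def lessThan_atLeast0)
    also have "\<dots> = (\<Sum>k<n. if k = j then mass k * x else 0) - (\<Sum>k<n. mass k * L $$ (k, j))"
      by (simp add: right_diff_distrib sum_subtractf if_distrib[of "\<lambda>y. mass _ * y"] cong: if_cong)
    also have "\<dots> = x * mass j" using j mass_weighted_column_sum[OF j] by simp
    finally show ?thesis using True i j by (simp add: bordered_lap_mat_def)
  next
    case False
    have "(mass_row_mat * shifted_lap_mat x) $$ (i, j)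
        = (\<Sum>k<n. (if i = k then 1 else 0) * shifted_lap_mat x $$ (k, j))"
      using i j False by (simp add: mass_row_mat_def scalar_prod_def lessThan_atLeast0 shifted_lap_mat_def)
    also have "\<dots> = (\<Sum>k<n. if i = k then shifted_lap_mat x $$ (k, j) else 0)"
      by (rule sum.cong) auto
    also have "\<dots> = shifted_lap_mat x $$ (i, j)" using i by simp
    finally show ?thesis using False i j by (simp add: bordered_lap_mat_def shifted_lap_mat_def)
  qed
qed (auto simp: bordered_lap_mat_def mass_row_mat_def shifted_lap_mat_def)

lemma mass_mult_det_shifted:
  assumes "0 < n"
  shows "mass 0 * Determinant.det (shifted_lap_mat x) = x * Determinant.det (bordered_lap_mat x)"
proof -
  have "Determinant.det (mass_row_mat * shifted_lap_mat x)
      = Determinant.det mass_row_mat * Determinant.det (shifted_lap_mat x)"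
    by (rule det_mult[of _ n]) (auto simp: mass_row_mat_def shifted_lap_mat_def)
  moreover have "Determinant.det (mass_row_mat * shifted_lap_mat x) = x * Determinant.det (bordered_lap_mat x)"
    using mass_row_mat_mult_shifted[OF assms] det_multrow[of 0 n "bordered_lap_mat x" x] assms
    by (simp add: bordered_lap_mat_def)
  ultimately show ?thesis using det_mass_row_mat[OF assms] by simp
qed

lemma det_bordered_lap_mat_0: "0 < n \<Longrightarrow> Determinant.det (bordered_lap_mat 0) \<noteq> 0"
proof
  assume n: "0 < n" and "Determinant.det (bordered_lap_mat 0) = 0"
  then obtain x where x: "x \<in> carrier_vec n" "x \<noteq> 0\<^sub>v n" "bordered_lap_mat 0 *\<^sub>v x = 0\<^sub>v n"
    using det_0_iff_vec_prod_zero[of "bordered_lap_mat 0" n] by (auto simp: bordered_lap_mat_def)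
  define v where "v j = x $ j" for j
  have x_eq: "x = Matrix.vec n v" using x(1) by (auto simp: v_def)
  have row: "(bordered_lap_mat 0 *\<^sub>v x) $ i = 0" if "i < n" for i
    using x that by simp
  have mean: "(\<Sum>j<n. mass j * v j) = 0"
    using row[OF n] n x(1) by (simp add: bordered_lap_mat_def scalar_prod_def lessThan_atLeast0 v_def)
  have lap_off_0: "lap w r n v i = 0" if "i < n" "i \<noteq> 0" for i
  proof -
    have "(bordered_lap_mat 0 *\<^sub>v x) $ i = - ((L *\<^sub>v x) $ i)"
      using that x(1) by (simp add: bordered_lap_mat_def scalar_prod_def sum_negf[symmetric] L_carrier lap_mat_def)
    then show ?thesis using row[OF that(1)] L_mult_vec[OF that(1)] unfolding x_eq by simp
  qed
  have "(\<Sum>i<n. mass i * lap w r n v i) = mass 0 * lap w r n v 0 + (\<Sum>i\<in>{..<n}-{0}. mass i * lap w r n v i)"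
    using n by (subst sum.remove[of _ 0]) auto
  also have "(\<Sum>i\<in>{..<n}-{0}. mass i * lap w r n v i) = 0"
    using lap_off_0 by (intro sum.neutral) auto
  finally have "mass 0 * lap w r n v 0 = (\<Sum>i<n. mass i * lap w r n v i)" by simp
  then have "lap w r n v 0 = 0"
    using sum_mass_mult_lap mass_pos[OF n] by simp
  then have dirichlet_0: "dirichlet v v = 0"
    unfolding dirichlet_eq_inner_lap inner_mass_def
    using lap_off_0 by (intro sum.neutral) (metis lessThan_iff mult_zero_right)
  have "x $ i = 0" if "i < n" for i
    using dirichlet_eq_0_mean_zero_imp_0[OF dirichlet_0 mean that] by (simp add: v_def)
  then have "x = 0\<^sub>v n"
    using x(1) by (intro eq_vecI) auto
  then show False using x(2) by simp
qed

lemma continuous_det_bordered_lap_mat: "continuous_on UNIV (\<lambda>x. Determinant.det (bordered_lap_mat x))"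
proof -
  define c where "c i j = (if i = 0 then mass j else - L $$ (i, j))" for i j
  define e where "e i j = (if i \<noteq> 0 \<and> i = j then 1 else 0 :: real)" for i j :: nat
  have "Determinant.det (bordered_lap_mat x)
      = (\<Sum>\<pi> \<in> {\<pi>. \<pi> permutes {0..<n}}. signof \<pi> * (\<Prod>i = 0..<n. c i (\<pi> i) + x * e i (\<pi> i)))"
    for x
  proof -
    have "Determinant.det (bordered_lap_mat x)
        = (\<Sum>\<pi> \<in> {\<pi>. \<pi> permutes {0..<n}}. signof \<pi> * (\<Prod>i = 0..<n. bordered_lap_mat x $$ (i, \<pi> i)))"
      by (rule det_def') (simp add: bordered_lap_mat_def)
    also have "\<dots> = (\<Sum>\<pi> \<in> {\<pi>. \<pi> permutes {0..<n}}. signof \<pi> * (\<Prod>i = 0..<n. c i (\<pi> i) + x * e i (\<pi> i)))"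
    proof (intro sum.cong refl arg_cong2[where f = "(*)"] prod.cong)
      fix \<pi> i assume "\<pi> \<in> {\<pi>. \<pi> permutes {0..<n}}" "i \<in> {0..<n}"
      then have "\<pi> i < n" "i < n" by (auto simp: permutes_in_image)
      then show "bordered_lap_mat x $$ (i, \<pi> i) = c i (\<pi> i) + x * e i (\<pi> i)"
        by (auto simp: bordered_lap_mat_def c_def e_def)
    qed
    finally show ?thesis .
  qed
  then show ?thesis by (simp only:) (intro continuous_intros)
qed

text \<open>Zero is a simple eigenvalue: if \<open>x\<^sup>2\<close> divided the characteristic polynomial, then
  \<open>det (bordered_lap_mat x) = mass 0 * x * q x\<close> for \<open>x \<noteq> 0\<close>, and by continuity it would vanish at \<open>0\<close>.\<close>

lemma order_0_char_poly_le_1: "0 < n \<Longrightarrow> order 0 (char_poly L) \<le> 1"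
proof (rule ccontr)
  assume n: "0 < n" and "\<not> order 0 (char_poly L) \<le> 1"
  then have "[:-0, 1:] ^ 2 dvd char_poly L" by (subst order_divides) simp
  then obtain q where q: "char_poly L = [:0, 1:] ^ 2 * q" by auto
  define h where "h x = mass 0 * x * poly q x" for x
  have det_eq_h: "Determinant.det (bordered_lap_mat x) = h x" if "x \<noteq> 0" for x
  proof -
    have "x * Determinant.det (bordered_lap_mat x) = mass 0 * (x ^ 2 * poly q x)"
      using mass_mult_det_shifted[OF n, of x] poly_char_poly_eq_det[of x] q by simp
    then have "x * Determinant.det (bordered_lap_mat x) = x * h x"
      by (simp add: h_def power2_eq_square algebra_simps)
    then show ?thesis using that by simp
  qed
  have "((\<lambda>x. Determinant.det (bordered_lap_mat x)) \<longlongrightarrow> Determinant.det (bordered_lap_mat 0)) (at 0)"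
    using continuous_det_bordered_lap_mat by (metis UNIV_I continuous_on_def at_within_open open_UNIV)
  moreover have "((\<lambda>x. Determinant.det (bordered_lap_mat x)) \<longlongrightarrow> h 0) (at 0)"
  proof -
    have "(h \<longlongrightarrow> h 0) (at 0)"
      unfolding h_def by (intro tendsto_intros isCont_tendsto_compose[OF poly_isCont])
    then show ?thesis
      by (rule Lim_transform_eventually) (auto simp: eventually_at_filter det_eq_h)
  qed
  ultimately have "Determinant.det (bordered_lap_mat 0) = h 0"
    by (rule tendsto_unique[OF trivial_limit_at])
  then show False using det_bordered_lap_mat_0[OF n] by (simp add: h_def)
qed

section \<open>The spectral gap\<close>

text \<open>Requiring functions to vanish off the vertex set makes this set compact in \<open>nat \<Rightarrow> real\<close>.\<close>

definition mean_zero_sphere :: "(nat \<Rightarrow> real) set" where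
  "mean_zero_sphere = {v. (\<forall>i\<ge>n. v i = 0) \<and> (\<Sum>i<n. mass i * v i) = 0 \<and> sqnorm v = 1}"

lemma continuous_on_coordinate: "continuous_on A (\<lambda>x :: nat \<Rightarrow> real. x i)"
  by (rule continuous_on_subset[OF continuous_on_product_coordinates]) simp

lemma compact_mean_zero_sphere: "0 < n \<Longrightarrow> compact mean_zero_sphere"
proof -
  assume n: "0 < n"
  define m where "m = Min (mass ` {..<n})"
  have m: "m > 0" "\<And>i. i < n \<Longrightarrow> m \<le> mass i"
    using n mass_pos unfolding m_def by (subst Min_gr_iff) auto
  define C where "C = sqrt (1 / m)"
  have bounded: "mean_zero_sphere \<subseteq> PiE UNIV (\<lambda>_. {-C..C})"
  proof
    fix v assume v: "v \<in> mean_zero_sphere"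
    have "\<bar>v i\<bar> \<le> C" for i
    proof (cases "i < n")
      case True
      have "m * v i ^ 2 \<le> mass i * v i ^ 2" using m(2)[OF True] by (intro mult_right_mono) auto
      also have "\<dots> \<le> 1" using mass_mult_sq_le_sqnorm[OF True, of v] v by (simp add: mean_zero_sphere_def)
      finally have "v i ^ 2 \<le> 1 / m" using m(1) by (simp add: field_simps)
      then show ?thesis unfolding C_def by (metis real_sqrt_abs real_sqrt_le_mono)
    next
      case False then show ?thesis using v m(1) by (simp add: mean_zero_sphere_def C_def)
    qed
    then show "v \<in> PiE UNIV (\<lambda>_. {-C..C})" by (simp add: PiE_iff abs_le_iff) (meson minus_le_iff)
  qed
  have "compactin (product_topology (\<lambda>i. euclidean) UNIV) (PiE UNIV (\<lambda>_. {-C..C::real}))"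
    by (subst compactin_PiE) auto
  then have compact_box: "compact (PiE UNIV (\<lambda>_. {-C..C::real}))"
    by (simp add: euclidean_product_topology)
  have "mean_zero_sphere = (\<Inter>i\<in>{n..}. {v. v i = 0}) \<inter> {v. (\<Sum>i<n. mass i * v i) = 0} \<inter> {v. sqnorm v = 1}"
    unfolding mean_zero_sphere_def by auto
  moreover have "closed (\<Inter>i\<in>{n..}. {v :: nat \<Rightarrow> real. v i = 0})"
    by (intro closed_INT ballI closed_Collect_eq continuous_on_coordinate continuous_on_const)
  moreover have "closed {v :: nat \<Rightarrow> real. (\<Sum>i<n. mass i * v i) = 0}"
    by (intro closed_Collect_eq continuous_intros continuous_on_coordinate)
  moreover have "closed {v. sqnorm v = 1}"
    unfolding sqnorm_def by (intro closed_Collect_eq continuous_intros continuous_on_coordinate)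
  ultimately have "closed mean_zero_sphere" by auto
  then show ?thesis
    using compact_Int_closed[OF compact_box] bounded by (metis Int_absorb1)
qed

lemma mean_zero_sphere_nonempty: "2 \<le> n \<Longrightarrow> mean_zero_sphere \<noteq> {}"
proof -
  assume n: "2 \<le> n"
  have m0: "mass 0 > 0" and m1: "mass 1 > 0" using mass_pos n by auto
  define s where "s = mass 0 * mass 1 * (mass 0 + mass 1)"
  have s: "s > 0" unfolding s_def using m0 m1 by simp
  define v where "v i = (if i = 0 then mass 1 else if i = 1 then - mass 0 else 0) / sqrt s" for i :: nat
  have sub: "{0, 1} \<subseteq> {..<n}" using n by auto
  have "(\<Sum>i<n. mass i * v i) = (\<Sum>i\<in>{0, 1}. mass i * v i)"
    by (rule sum.mono_neutral_right[OF _ sub]) (auto simp: v_def)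
  also have "\<dots> = 0" by (simp add: v_def algebra_simps)
  finally have mean: "(\<Sum>i<n. mass i * v i) = 0" .
  have "sqnorm v = (\<Sum>i\<in>{0, 1}. mass i * v i ^ 2)"
    unfolding sqnorm_def by (rule sum.mono_neutral_right[OF _ sub]) (auto simp: v_def)
  also have "\<dots> = (mass 0 * mass 1 ^ 2 + mass 1 * mass 0 ^ 2) / s"
    using s by (simp add: v_def power_divide add_divide_distrib)
  also have "\<dots> = 1" using s by (simp add: s_def power2_eq_square algebra_simps)
  finally have "v \<in> mean_zero_sphere" unfolding mean_zero_sphere_def using mean n by (auto simp: v_def)
  then show ?thesis by auto
qed

lemma dirichlet_continuous: "continuous_on A (\<lambda>v. dirichlet v v)"
  unfolding dirichlet_def by (intro continuous_intros continuous_on_coordinate)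

lemma poincare_if_bound_on_sphere:
  assumes "\<And>y. y \<in> mean_zero_sphere \<Longrightarrow> m \<le> dirichlet y y" and "(\<Sum>i<n. mass i * v i) = 0"
  shows "dirichlet v v \<ge> m * sqnorm v"
proof (cases "sqnorm v = 0")
  case True
  then have "dirichlet v v = dirichlet (\<lambda>_. 0) (\<lambda>_. 0)"
    by (intro dirichlet_cong) (simp_all add: sqnorm_eq_0_iff)
  then show ?thesis using True by (simp add: dirichlet_def)
next
  case False
  then have pos: "sqnorm v > 0" using sqnorm_nonneg[of v] by simp
  define c where "c = 1 / sqrt (sqnorm v)"
  define y where "y i = (if i < n then c * v i else 0)" for i
  have "sqnorm y = c ^ 2 * sqnorm v"
    by (simp add: sqnorm_cong[of y "\<lambda>i. c * v i"] y_def sqnorm_scale)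
  also have "\<dots> = 1" using pos by (simp add: c_def power_divide)
  finally have "y \<in> mean_zero_sphere"
    using assms(2) by (simp add: mean_zero_sphere_def y_def sum_distrib_left[symmetric] mult.left_commute)
  then have "m \<le> dirichlet y y" by (rule assms(1))
  also have "dirichlet y y = c ^ 2 * dirichlet v v"
    by (simp add: dirichlet_cong[of y "\<lambda>i. c * v i" y "\<lambda>i. c * v i"] y_def dirichlet_scale)
  also have "\<dots> = dirichlet v v / sqnorm v" using pos by (simp add: c_def power_divide)
  finally show ?thesis using pos by (simp add: field_simps)
qed

text \<open>A minimizer of the Dirichlet form on the sphere is an eigenfunction: the first variation in
  every mean-zero direction \<open>h\<close> vanishes, and \<open>lap vs - \<mu> vs\<close> is itself such a direction.\<close>

lemma sphere_minimizer_is_eigenfunction: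
  assumes vs: "vs \<in> mean_zero_sphere" and min: "\<And>y. y \<in> mean_zero_sphere \<Longrightarrow> dirichlet vs vs \<le> dirichlet y y"
    and i: "i < n"
  shows "lap w r n vs i = dirichlet vs vs * vs i"
proof -
  define \<mu> where "\<mu> = dirichlet vs vs"
  have vs_mean: "(\<Sum>i<n. mass i * vs i) = 0" and vs_norm: "sqnorm vs = 1"
    using vs by (auto simp: mean_zero_sphere_def)
  have poincare: "\<mu> * sqnorm v \<le> dirichlet v v" if "(\<Sum>i<n. mass i * v i) = 0" for v
    using poincare_if_bound_on_sphere[OF _ that] min unfolding \<mu>_def by blast
  have variation: "dirichlet h vs = \<mu> * inner_mass vs h" if h: "(\<Sum>i<n. mass i * h i) = 0" for h
  proof -
    have "(dirichlet h h - \<mu> * sqnorm h) * t ^ 2 + 2 * (dirichlet h vs - \<mu> * inner_mass vs h) * t \<ge> 0" for t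
    proof -
      have "(\<Sum>i<n. mass i * (vs i + t * h i)) = 0"
        using vs_mean h by (simp add: algebra_simps sum.distrib sum_distrib_left[symmetric])
      then have "dirichlet (\<lambda>i. vs i + t * h i) (\<lambda>i. vs i + t * h i) \<ge> \<mu> * sqnorm (\<lambda>i. vs i + t * h i)"
        by (rule poincare)
      then show ?thesis
        unfolding dirichlet_add_scaled sqnorm_add_scaled using vs_norm \<mu>_def by (simp add: algebra_simps)
    qed
    then show ?thesis
      using linear_coeff_eq_0_if_quadratic_nonneg[of "dirichlet h h - \<mu> * sqnorm h"
          "dirichlet h vs - \<mu> * inner_mass vs h"] by simp
  qed
  define g where "g i = lap w r n vs i - \<mu> * vs i" for i
  have "(\<Sum>i<n. mass i * g i) = (\<Sum>i<n. mass i * lap w r n vs i) - \<mu> * (\<Sum>i<n. mass i * vs i)"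
    by (simp add: g_def algebra_simps sum_subtractf sum_distrib_left)
  then have "dirichlet g vs = \<mu> * inner_mass vs g"
    using vs_mean sum_mass_mult_lap by (intro variation) simp
  then have "(\<Sum>i<n. mass i * g i * lap w r n vs i) - (\<Sum>i<n. \<mu> * (mass i * vs i * g i)) = 0"
    by (simp add: dirichlet_eq_inner_lap inner_mass_def sum_distrib_left)
  then have "sqnorm g = 0"
    by (simp add: sqnorm_def sum_subtractf[symmetric] g_def power2_eq_square algebra_simps)
  then show ?thesis using i by (simp add: sqnorm_eq_0_iff g_def \<mu>_def)
qed

lemma spectral_gap:
  assumes "2 \<le> n"
  shows "\<exists>\<mu>>0. poly (char_poly L) \<mu> = 0 \<and>
           (\<forall>v. (\<Sum>i<n. mass i * v i) = 0 \<longrightarrow> dirichlet v v \<ge> \<mu> * sqnorm v)"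
proof -
  obtain vs where vs: "vs \<in> mean_zero_sphere" and min: "\<And>y. y \<in> mean_zero_sphere \<Longrightarrow> dirichlet vs vs \<le> dirichlet y y"
    using continuous_attains_inf[OF compact_mean_zero_sphere mean_zero_sphere_nonempty[OF assms]
        dirichlet_continuous] assms by auto
  define \<mu> where "\<mu> = dirichlet vs vs"
  have vs_mean: "(\<Sum>i<n. mass i * vs i) = 0" and vs_norm: "sqnorm vs = 1"
    using vs by (auto simp: mean_zero_sphere_def)
  obtain k where k: "k < n" "vs k \<noteq> 0"
    using vs_norm sqnorm_eq_0_iff[of vs] by auto
  have "\<mu> \<noteq> 0"
    using dirichlet_eq_0_mean_zero_imp_0[OF _ vs_mean k(1)] k(2) by (auto simp: \<mu>_def)
  then have "\<mu> > 0"
    using dirichlet_nonneg[of vs] by (simp add: \<mu>_def)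
  moreover have "poly (char_poly L) \<mu> = 0"
    unfolding char_poly_root_iff_lap_eigenfunction \<mu>_def
    using k sphere_minimizer_is_eigenfunction[OF vs min] by blast
  moreover have "dirichlet v v \<ge> \<mu> * sqnorm v" if "(\<Sum>i<n. mass i * v i) = 0" for v
    using poincare_if_bound_on_sphere[OF _ that] min unfolding \<mu>_def by blast
  ultimately show ?thesis by blast
qed

lemma kth_eigenvalue_2_bounds:
  assumes n: "2 \<le> n" and \<mu>: "\<mu> > 0" "poly (char_poly L) \<mu> = 0"
  shows "0 < kth_eigenvalue L 2" and "kth_eigenvalue L 2 \<le> \<mu>"
proof -
  let ?p = "char_poly L"
  have p_ne_0: "?p \<noteq> 0"
    using degree_monic_char_poly[OF L_carrier] by auto
  have finite_roots: "finite {\<nu>. poly ?p \<nu> = 0}"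
    using poly_roots_finite[OF p_ne_0] .
  define \<Lambda> where "\<Lambda> = {m. poly ?p m = 0 \<and> (\<Sum>\<nu>\<in>{\<nu>. poly ?p \<nu> = 0 \<and> \<nu> \<le> m}. order \<nu> ?p) \<ge> 2}"
  have kth: "kth_eigenvalue L 2 = Inf \<Lambda>" unfolding kth_eigenvalue_def \<Lambda>_def by simp
  have finite_\<Lambda>: "finite \<Lambda>" by (rule finite_subset[OF _ finite_roots]) (auto simp: \<Lambda>_def)
  have root_0: "poly ?p 0 = 0" using char_poly_root_0 n by simp
  have order_pos: "order a ?p \<ge> 1" if "poly ?p a = 0" for a
    using that p_ne_0 order_root[of ?p a] by simp
  have "\<mu> \<in> \<Lambda>"
  proof -
    have "(2::nat) \<le> (\<Sum>\<nu>\<in>{0, \<mu>}. order \<nu> ?p)"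
      using order_pos[OF root_0] order_pos[OF \<mu>(2)] \<mu>(1) by simp
    also have "\<dots> \<le> (\<Sum>\<nu>\<in>{\<nu>. poly ?p \<nu> = 0 \<and> \<nu> \<le> \<mu>}. order \<nu> ?p)"
      using root_0 \<mu> by (intro sum_mono2 finite_subset[OF _ finite_roots]) auto
    finally show ?thesis unfolding \<Lambda>_def using \<mu> by simp
  qed
  then have Inf_eq_Min: "Inf \<Lambda> = Min \<Lambda>" by (intro cInf_eq_Min[OF finite_\<Lambda>]) auto
  show "kth_eigenvalue L 2 \<le> \<mu>"
    unfolding kth Inf_eq_Min using finite_\<Lambda> \<open>\<mu> \<in> \<Lambda>\<close> by simp
  have "Inf \<Lambda> \<in> \<Lambda>" unfolding Inf_eq_Min using finite_\<Lambda> \<open>\<mu> \<in> \<Lambda>\<close> by (intro Min_in) auto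
  then have Inf_root: "poly ?p (Inf \<Lambda>) = 0" and Inf_order: "(\<Sum>\<nu>\<in>{\<nu>. poly ?p \<nu> = 0 \<and> \<nu> \<le> Inf \<Lambda>}. order \<nu> ?p) \<ge> 2"
    unfolding \<Lambda>_def by auto
  show "0 < kth_eigenvalue L 2"
  proof (rule ccontr)
    assume "\<not> 0 < kth_eigenvalue L 2"
    then have "Inf \<Lambda> = 0" using char_poly_root_nonneg[OF Inf_root] kth by simp
    moreover have "{\<nu>. poly ?p \<nu> = 0 \<and> \<nu> \<le> 0} = {0}" using root_0 char_poly_root_nonneg by force
    ultimately have "order 0 ?p \<ge> 2" using Inf_order by simp
    then show False using order_0_char_poly_le_1 n by simp
  qed
qed

lemma poincare_kth_eigenvalue_2:
  assumes "2 \<le> n"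
  shows "kth_eigenvalue L 2 > 0"
    and "\<And>v. (\<Sum>i<n. mass i * v i) = 0 \<Longrightarrow> dirichlet v v \<ge> kth_eigenvalue L 2 * sqnorm v"
proof -
  obtain \<mu> where \<mu>: "\<mu> > 0" "poly (char_poly L) \<mu> = 0"
    and poincare: "\<And>v. (\<Sum>i<n. mass i * v i) = 0 \<Longrightarrow> dirichlet v v \<ge> \<mu> * sqnorm v"
    using spectral_gap[OF assms] by blast
  show "kth_eigenvalue L 2 > 0" using kth_eigenvalue_2_bounds[OF assms \<mu>] by simp
  fix v assume "(\<Sum>i<n. mass i * v i) = 0"
  then have "\<mu> * sqnorm v \<le> dirichlet v v" by (rule poincare)
  moreover have "kth_eigenvalue L 2 * sqnorm v \<le> \<mu> * sqnorm v"
    using kth_eigenvalue_2_bounds[OF assms \<mu>] sqnorm_nonneg by (intro mult_right_mono) auto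
  ultimately show "dirichlet v v \<ge> kth_eigenvalue L 2 * sqnorm v" by simp
qed

section \<open>Decay of the heat flow\<close>

lemma heat_mass_conserved:
  assumes "heat_solution w r n u"
  shows "(\<Sum>i<n. mass i * u t i) = (\<Sum>i<n. mass i * u 0 i)"
proof -
  have "((\<lambda>t. \<Sum>i<n. mass i * u t i) has_real_derivative 0) (at t)" for t
  proof -
    have "((\<lambda>t. \<Sum>i<n. mass i * u t i) has_real_derivative (\<Sum>i<n. mass i * - lap w r n (u t) i)) (at t)"
      using assms unfolding heat_solution_def by (intro DERIV_sum DERIV_cmult) auto
    then show ?thesis using sum_mass_mult_lap[of "u t"] by (simp add: sum_negf)
  qed
  then show ?thesis using DERIV_isconst_all by blast
qed

lemma heat_decay:
  assumes sol: "heat_solution w r n u"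
    and poincare: "\<And>v. (\<Sum>i<n. mass i * v i) = 0 \<Longrightarrow> dirichlet v v \<ge> \<mu> * sqnorm v"
    and mean: "(\<Sum>i<n. mass i * u 0 i) = c * (\<Sum>i<n. mass i)"
    and "\<tau> \<ge> 0"
  shows "sqnorm (\<lambda>i. u \<tau> i - c) \<le> exp (-2 * \<mu> * \<tau>) * sqnorm (\<lambda>i. u 0 i - c)"
proof -
  define E where "E t = sqnorm (\<lambda>i. u t i - c)" for t
  have mean_zero: "(\<Sum>i<n. mass i * (u t i - c)) = 0" for t
    using heat_mass_conserved[OF sol, of t] mean
    by (simp add: algebra_simps sum_subtractf sum_distrib_left)
  have dE: "(E has_real_derivative - 2 * dirichlet (\<lambda>i. u t i - c) (\<lambda>i. u t i - c)) (at t)" for t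
  proof -
    have "(E has_real_derivative (\<Sum>i<n. mass i * (2 * (u t i - c) * - lap w r n (u t) i))) (at t)"
      using sol unfolding E_def sqnorm_def heat_solution_def
      by (intro DERIV_sum DERIV_cmult) (auto intro!: derivative_eq_intros)
    moreover have "lap w r n (\<lambda>i. u t i - c) = lap w r n (u t)"
      by (simp add: lap_def fun_eq_iff)
    ultimately show ?thesis
      by (simp add: dirichlet_eq_inner_lap inner_mass_def sum_distrib_left algebra_simps sum_negf)
  qed
  define F where "F t = exp (2 * \<mu> * t) * E t" for t
  have "F \<tau> \<le> F 0"
  proof (rule DERIV_nonpos_imp_nonincreasing[OF assms(4)])
    fix t :: real
    let ?v = "\<lambda>i. u t i - c"
    have "(F has_real_derivative exp (2 * \<mu> * t) * (2 * (\<mu> * E t - dirichlet ?v ?v))) (at t)"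
      unfolding F_def by (auto intro!: derivative_eq_intros dE simp: algebra_simps)
    moreover have "\<mu> * E t - dirichlet ?v ?v \<le> 0"
      unfolding E_def using poincare[OF mean_zero] by simp
    ultimately show "\<exists>y. (F has_real_derivative y) (at t) \<and> y \<le> 0"
      by (intro exI conjI) (auto simp: mult_nonneg_nonpos)
  qed
  then show ?thesis
    by (simp add: F_def E_def exp_minus field_simps mult_exp_exp[symmetric])
qed

section \<open>Indicator initial data\<close>

lemma dmin_pos: "0 < n \<Longrightarrow> dmin w n > 0"
  unfolding dmin_def using deg_pos by (subst Min_gr_iff) auto

lemma dmin_powr_le_mass: "0 \<le> r \<Longrightarrow> i < n \<Longrightarrow> dmin w n powr r \<le> mass i"
  unfolding mass_def using dmin_pos by (intro powr_mono2) (auto simp: dmin_def)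

lemma dmin_powr_le_vol:
  "0 \<le> r \<Longrightarrow> X \<subseteq> {..<n} \<Longrightarrow> X \<noteq> {} \<Longrightarrow> dmin w n powr r \<le> vol w r n X"
proof -
  assume r: "0 \<le> r" and X: "X \<subseteq> {..<n}" "X \<noteq> {}"
  then obtain i where i: "i \<in> X" by auto
  have "finite X" using X(1) finite_subset by blast
  then have "mass i \<le> vol w r n X"
    unfolding vol_eq_sum_mass using i X(1) mass_pos by (intro member_le_sum) (auto intro: less_imp_le)
  then show ?thesis using dmin_powr_le_mass[OF r] i X(1) by force
qed

lemma dmin_powr_half_sq: "(dmin w n powr (r/2)) ^ 2 = dmin w n powr r"
  by (simp add: power2_eq_square powr_add[symmetric])

lemma abs_lt_if_sqnorm_lt:
  assumes "0 \<le> r" "0 \<le> \<delta>" "sqnorm v < (\<delta> * dmin w n powr (r/2)) ^ 2" "i < n"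
  shows "\<bar>v i\<bar> < \<delta>"
proof -
  have "mass i * v i ^ 2 < \<delta> ^ 2 * mass i"
    using mass_mult_sq_le_sqnorm[OF assms(4), of v] assms(3)
      mult_left_mono[OF dmin_powr_le_mass[OF assms(1,4)], of "\<delta> ^ 2"]
    by (simp add: power_mult_distrib dmin_powr_half_sq)
  then have "\<bar>v i\<bar> ^ 2 < \<delta> ^ 2" using mass_pos[OF assms(4)] by (simp add: mult.commute)
  then show ?thesis using assms(2) by (rule power_less_imp_less_base)
qed

lemma sqnorm_indicator_deviation:
  assumes S: "S \<subseteq> {..<n}" and n: "0 < n"
  defines "R \<equiv> vol w r n S / vol w r n {..<n}"
  shows "(\<Sum>i<n. mass i * (if i \<in> S then 1 else 0)) = R * (\<Sum>i<n. mass i)"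
    and "sqnorm (\<lambda>i. (if i \<in> S then 1 else 0) - R)
           = vol w r n S * vol w r n ({..<n} - S) / vol w r n {..<n}"
proof -
  define A B V where "A = vol w r n S" and "B = vol w r n ({..<n} - S)" and "V = vol w r n {..<n}"
  have split: "(\<Sum>i<n. f i) = (\<Sum>i\<in>S. f i) + (\<Sum>i\<in>{..<n} - S. f i)" for f :: "nat \<Rightarrow> real"
    using S by (metis finite_lessThan sum.subset_diff add.commute)
  have V: "V = A + B" unfolding A_def B_def V_def vol_eq_sum_mass by (rule split)
  have V_pos: "V > 0"
    unfolding V_def vol_eq_sum_mass using n mass_pos by (intro sum_pos) auto
  have R: "R = A / V" unfolding R_def A_def V_def ..
  have "(\<Sum>i<n. mass i * (if i \<in> S then 1 else 0)) = A"
    unfolding A_def vol_eq_sum_mass using S by (simp add: if_distrib sum.If_cases inf.absorb2)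
  then show "(\<Sum>i<n. mass i * (if i \<in> S then 1 else 0)) = R * (\<Sum>i<n. mass i)"
    using V_pos R unfolding V_def vol_eq_sum_mass by simp
  have "sqnorm (\<lambda>i. (if i \<in> S then 1 else 0) - R) = A * (1 - R) ^ 2 + B * R ^ 2"
    unfolding sqnorm_def A_def B_def vol_eq_sum_mass sum_distrib_right
    by (subst split) (intro arg_cong2[where f = "(+)"] sum.cong; simp)
  also have "\<dots> = A * (B / V) ^ 2 + B * (A / V) ^ 2"
    using V V_pos by (subst R, subst R) (simp add: field_simps)
  also have "\<dots> = A * B * (A + B) / V ^ 2"
    using V_pos by (simp add: power2_eq_square field_simps)
  also have "\<dots> = A * B / V"
    using V V_pos by (simp add: power2_eq_square)
  finally show "sqnorm (\<lambda>i. (if i \<in> S then 1 else 0) - R)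
      = vol w r n S * vol w r n ({..<n} - S) / vol w r n {..<n}"
    unfolding A_def B_def V_def .
qed

text \<open>Both volumes are at least \<open>d\<^sub>-\<^sup>r\<close>, so \<open>A B / V = R B = (1 - R) A \<ge> d\<^sub>-\<^sup>r / 2\<close>,
  while \<open>(R - 1/2)\<^sup>2 = 1/4 - R (1 - R) < 1/4\<close>.\<close>

lemma dmin_powr_lt_vol_product:
  assumes r: "0 \<le> r" and S: "S \<subseteq> {..<n}" "S \<noteq> {}" "S \<noteq> {..<n}"
  defines "R \<equiv> vol w r n S / vol w r n {..<n}"
  shows "(\<bar>R - 1/2\<bar> * dmin w n powr (r/2)) ^ 2 < vol w r n S * vol w r n ({..<n} - S) / vol w r n {..<n}"
proof -
  define A B V q where "A = vol w r n S" and "B = vol w r n ({..<n} - S)"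
    and "V = vol w r n {..<n}" and "q = dmin w n powr r"
  have n: "0 < n" using S by auto
  have q: "q > 0" unfolding q_def using dmin_pos[OF n] by simp
  have A: "q \<le> A" unfolding A_def q_def using dmin_powr_le_vol[OF r S(1,2)] .
  have B: "q \<le> B" unfolding B_def q_def using S by (intro dmin_powr_le_vol[OF r]) auto
  have V: "V = A + B"
    unfolding A_def B_def V_def vol_eq_sum_mass using S(1) by (metis finite_lessThan sum.subset_diff add.commute)
  have AB: "A > 0" "B > 0" "V > 0" using A B q V by linarith+
  have R_eq: "R = A / V" unfolding R_def A_def V_def ..
  then have R: "R = A / V" "1 - R = B / V" using V AB by (auto simp: field_simps)
  have R_bounds: "0 \<le> R" "0 \<le> 1 - R" using R AB by simp_all
  have "q \<le> R * B + (1 - R) * A"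
    using mult_left_mono[OF B R_bounds(1)] mult_left_mono[OF A R_bounds(2)]
    by (simp add: algebra_simps)
  also have "R * B + (1 - R) * A = 2 * (A * B / V)" using R by simp
  finally have "q / 4 < A * B / V" using q by linarith
  moreover have "(R - 1/2) ^ 2 < 1/4"
  proof -
    have "(R - 1/2) ^ 2 = 1/4 - R * (1 - R)" by (simp add: power2_eq_square algebra_simps)
    moreover have "R * (1 - R) > 0" using R AB by simp
    ultimately show ?thesis by simp
  qed
  ultimately have "(R - 1/2) ^ 2 * q < A * B / V"
    using q mult_strict_right_mono[of "(R - 1/2) ^ 2" "1/4" q] by linarith
  then show ?thesis
    unfolding A_def B_def V_def q_def power_mult_distrib dmin_powr_half_sq power2_abs .
qed

lemma heat_indicator_decay:
  assumes sol: "heat_solution w r n u" and init: "\<And>i. i < n \<Longrightarrow> u 0 i = (if i \<in> S then 1 else 0)"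
    and S: "S \<subseteq> {..<n}" and n: "2 \<le> n" and "\<tau> \<ge> 0"
  defines "R \<equiv> vol w r n S / vol w r n {..<n}"
  shows "sqnorm (\<lambda>i. u \<tau> i - R)
           \<le> exp (-2 * kth_eigenvalue L 2 * \<tau>) * (vol w r n S * vol w r n ({..<n} - S) / vol w r n {..<n})"
proof -
  have "(\<Sum>i<n. mass i * u 0 i) = (\<Sum>i<n. mass i * (if i \<in> S then 1 else 0))"
    using init by (intro sum.cong) simp_all
  then have mean: "(\<Sum>i<n. mass i * u 0 i) = R * (\<Sum>i<n. mass i)"
    using sqnorm_indicator_deviation(1)[OF S] n unfolding R_def by simp
  have "sqnorm (\<lambda>i. u 0 i - R) = sqnorm (\<lambda>i. (if i \<in> S then 1 else 0) - R)"
    using init by (intro sqnorm_cong) simp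
  also have "\<dots> = vol w r n S * vol w r n ({..<n} - S) / vol w r n {..<n}"
    using sqnorm_indicator_deviation(2)[OF S] n unfolding R_def by simp
  finally show ?thesis
    using heat_decay[OF sol poincare_kth_eigenvalue_2(2)[OF n] mean assms(5)] by simp
qed

end

theorem mainTheorem11:
  fixes w :: "nat \<Rightarrow> nat \<Rightarrow> real" and n :: nat and r \<tau> :: real
    and S :: "nat set" and u :: "real \<Rightarrow> nat \<Rightarrow> real"
  assumes sym: "\<And>i j. i < n \<Longrightarrow> j < n \<Longrightarrow> w i j = w j i"
    and nonneg: "\<And>i j. i < n \<Longrightarrow> j < n \<Longrightarrow> w i j \<ge> 0"
    and diag: "\<And>i. i < n \<Longrightarrow> w i i = 0"
    and degpos: "\<And>i. i < n \<Longrightarrow> deg w n i > 0"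
    and r: "0 \<le> r" "r \<le> 1"
    and conn: "graph_connected w n"
    and S: "S \<subseteq> {..<n}" "S \<noteq> {}" "S \<noteq> {..<n}"
    and RS: "vol w r n S / vol w r n {..<n} \<noteq> 1/2"
    and tau: "\<tau> > (1 / kth_eigenvalue (lap_mat w r n) 2) *
        ln (sqrt (vol w r n S) * sqrt (vol w r n ({..<n} - S)) /
            (sqrt (vol w r n {..<n}) * \<bar>vol w r n S / vol w r n {..<n} - 1/2\<bar>
             * dmin w n powr (r/2)))"
    and sol: "heat_solution w r n u"
    and init: "\<And>i. i < n \<Longrightarrow> u 0 i = (if i \<in> S then 1 else 0)"
  shows "(vol w r n S / vol w r n {..<n} > 1/2 \<longrightarrow> {i. i < n \<and> u \<tau> i \<ge> 1/2} = {..<n}) \<and>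
         (vol w r n S / vol w r n {..<n} < 1/2 \<longrightarrow> {i. i < n \<and> u \<tau> i \<ge> 1/2} = {})"
proof -
  interpret weighted_graph w n r
    using sym nonneg degpos conn by unfold_locales
  have n: "2 \<le> n" using S by (rule two_le_if_proper_nonempty_subset)
  define R where "R = vol w r n S / vol w r n {..<n}"
  define E where "E = vol w r n S * vol w r n ({..<n} - S) / vol w r n {..<n}"
  define a where "a = \<bar>R - 1/2\<bar> * dmin w n powr (r/2)"
  have a_pos: "a > 0"
    using RS dmin_pos n by (simp add: a_def R_def)
  have E_gt: "E > a ^ 2"
    unfolding E_def a_def R_def by (rule dmin_powr_lt_vol_product[OF r(1) S])
  have threshold_eq: "sqrt E / a = sqrt (vol w r n S) * sqrt (vol w r n ({..<n} - S)) /
      (sqrt (vol w r n {..<n}) * \<bar>vol w r n S / vol w r n {..<n} - 1/2\<bar> * dmin w n powr (r/2))"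
    by (simp add: E_def a_def R_def real_sqrt_mult real_sqrt_divide divide_divide_eq_left mult.assoc)
  have "\<tau> > (1 / kth_eigenvalue L 2) * ln (sqrt E / a)"
    unfolding threshold_eq by (rule tau)
  note threshold = exp_decay_below_threshold[OF poincare_kth_eigenvalue_2(1)[OF n] a_pos E_gt this]
  have "sqnorm (\<lambda>i. u \<tau> i - R) \<le> exp (-2 * kth_eigenvalue L 2 * \<tau>) * E"
    unfolding R_def E_def by (rule heat_indicator_decay[OF sol init S(1) n less_imp_le[OF threshold(1)]])
  also note threshold(2)
  finally have "sqnorm (\<lambda>i. u \<tau> i - R) < a ^ 2" .
  then have "\<bar>u \<tau> i - R\<bar> < \<bar>R - 1/2\<bar>" if "i < n" for i
    using abs_lt_if_sqnorm_lt[where v = "\<lambda>i. u \<tau> i - R", OF r(1) _ _ that] by (simp add: a_def)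
  then show ?thesis
    unfolding R_def by (rule superlevel_set_if_close)
qed

end
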